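(* For a prime $p$, let $I=\{1,2,\dots,\lfloor p/2\rfloor-1\}$, $K=\lceil\log p\rceil$, and let $R\subset I$ be the random set obtained by including each element of $I$ independently with probability $Kp^{-2/3}$. For an integer $n$ let $\mathcal Q(n):=\{(a,b,c,d,e)\in I^5:\ a,b,c\text{ pairwise distinct},\ a+b+c=n,\ c-d-e\in\{0,1\}\}$. Then, for $p$ sufficiently large, $$\mathbb P\big(\exists n\in[p/5,7p/5]\cap\mathbb Z:\ |\mathcal Q(n)\cap R^5|\ge K\big)\ll K^{-1},$$ with an absolute implied constant. *)

theory Defs
  imports "HOL-Probability.Probability" "HOL-Computational_Algebra.Primes"
begin

definition Iset :: "nat \<Rightarrow> int set" where
  "Iset p = {1 .. int (p div 2) - 1}"

definition Kp :: "nat \<Rightarrow> nat" where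
  "Kp p = nat \<lceil>ln (real p)\<rceil>"

definition rand_subset :: "int set \<Rightarrow> real \<Rightarrow> int set pmf" where
  "rand_subset A q = map_pmf (\<lambda>f. {x\<in>A. f x}) (Pi_pmf A False (\<lambda>_. bernoulli_pmf q))"

definition Qset :: "nat \<Rightarrow> int \<Rightarrow> (int \<times> int \<times> int \<times> int \<times> int) set" where
  "Qset p n = {(a,b,c,d,e). a \<in> Iset p \<and> b \<in> Iset p \<and> c \<in> Iset p \<and> d \<in> Iset p \<and> e \<in> Iset p
      \<and> a \<noteq> b \<and> a \<noteq> c \<and> b \<noteq> c \<and> a + b + c = n \<and> c - d - e \<in> {0, 1}}"

definition pow5 :: "int set \<Rightarrow> (int \<times> int \<times> int \<times> int \<times> int) set" where
  "pow5 R = {(a,b,c,d,e). a \<in> R \<and> b \<in> R \<and> c \<in> R \<and> d \<in> R \<and> e \<in> R}"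

end

theory Submission
  imports Defs "HOL-Real_Asymp.Real_Asymp"
begin

text \<open>
  Call \<open>R \<subseteq> I\<close> degenerate if it contains four disjoint pairs with a common sum, four disjoint
  pairs with a common nonzero difference, or four solutions in \<open>Q(n)\<close> (for one \<open>n\<close>) with pairwise
  disjoint entries. For non-degenerate \<open>R\<close> the number of solutions in \<open>R\<close> is bounded by an
  absolute constant: the third entry of a solution determines it up to 98 choices, and a given
  integer occurs in solutions with at most 26 distinct third entries, so among more than
  \<open>98 \<cdot> 26 \<cdot> 15\<close> solutions one can greedily pick four with disjoint entries. Hence, once
  \<open>K > 38220\<close>, the event forces \<open>R\<close> to be degenerate. A first moment bound (eight elements
  depending on five free parameters; four disjoint solutions, weighted by how many distinct
  entries each has) shows that this has probability \<open>O(K\<^sup>2\<^sup>0 p\<^sup>-\<^sup>1\<^sup>/\<^sup>3)\<close>, which is \<open>o(1/K)\<close>.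
\<close>

lemma set_pmf_rand_subset: "R \<in> set_pmf (rand_subset A q) \<Longrightarrow> R \<subseteq> A"
  unfolding rand_subset_def by auto

lemma prob_rand_subset_superset:
  assumes "finite A" "S \<subseteq> A" "0 \<le> q" "q \<le> 1"
  shows "measure_pmf.prob (rand_subset A q) {R. S \<subseteq> R} = q ^ card S"
proof -
  have "measure_pmf.prob (rand_subset A q) {R. S \<subseteq> R}
     = measure_pmf.prob (Pi_pmf A False (\<lambda>_. bernoulli_pmf q)) (Pi A (\<lambda>x. if x \<in> S then {True} else UNIV))"
    unfolding rand_subset_def measure_map_pmf
    using \<open>S \<subseteq> A\<close> by (intro arg_cong[where f="measure_pmf.prob _"]) (auto simp: Pi_def)
  also have "\<dots> = (\<Prod>x\<in>A. measure_pmf.prob (bernoulli_pmf q) (if x \<in> S then {True} else UNIV))"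
    using \<open>finite A\<close> by (rule measure_Pi_pmf_Pi)
  also have "\<dots> = (\<Prod>x\<in>A. if x \<in> S then q else 1)"
    using assms(3,4) by (intro prod.cong) (auto simp: measure_pmf_single)
  also have "\<dots> = q ^ card S"
    using assms(1,2) by (simp add: prod.If_cases Int_absorb1)
  finally show ?thesis .
qed

lemma prob_rand_subset_superset_ex_le:
  assumes "finite A" "finite T" "\<And>t. t \<in> T \<Longrightarrow> S t \<subseteq> A" "0 \<le> q" "q \<le> 1"
  shows "measure_pmf.prob (rand_subset A q) {R. \<exists>t\<in>T. S t \<subseteq> R} \<le> (\<Sum>t\<in>T. q ^ card (S t))"
proof -
  have "{R. \<exists>t\<in>T. S t \<subseteq> R} = (\<Union>t\<in>T. {R. S t \<subseteq> R})" by auto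
  hence "measure_pmf.prob (rand_subset A q) {R. \<exists>t\<in>T. S t \<subseteq> R}
      \<le> (\<Sum>t\<in>T. measure_pmf.prob (rand_subset A q) {R. S t \<subseteq> R})"
    using measure_pmf.finite_measure_subadditive_finite[OF \<open>finite T\<close>] by simp
  also have "\<dots> = (\<Sum>t\<in>T. q ^ card (S t))"
    using assms by (intro sum.cong refl prob_rand_subset_superset) auto
  finally show ?thesis .
qed

lemma prob_rand_subset_distinct_list_le:
  assumes "finite A" "finite T" "\<And>t. t \<in> T \<Longrightarrow> length (f t) = k" "0 \<le> q" "q \<le> 1"
  shows "measure_pmf.prob (rand_subset A q)
           {R. \<exists>t\<in>T. distinct (f t) \<and> set (f t) \<subseteq> A \<and> set (f t) \<subseteq> R} \<le> real (card T) * q ^ k"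
proof -
  define T' where "T' = {t \<in> T. distinct (f t) \<and> set (f t) \<subseteq> A}"
  have "finite T'" using \<open>finite T\<close> by (simp add: T'_def)
  have "{R. \<exists>t\<in>T. distinct (f t) \<and> set (f t) \<subseteq> A \<and> set (f t) \<subseteq> R} = {R. \<exists>t\<in>T'. set (f t) \<subseteq> R}"
    by (auto simp: T'_def)
  hence "measure_pmf.prob (rand_subset A q) {R. \<exists>t\<in>T. distinct (f t) \<and> set (f t) \<subseteq> A \<and> set (f t) \<subseteq> R}
      \<le> (\<Sum>t\<in>T'. q ^ card (set (f t)))"
    using prob_rand_subset_superset_ex_le[OF \<open>finite A\<close> \<open>finite T'\<close>, of "\<lambda>t. set (f t)"] assms(4,5)
    by (auto simp: T'_def)
  also have "\<dots> = real (card T') * q ^ k"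
    using assms(3) by (simp add: T'_def distinct_card)
  also have "\<dots> \<le> real (card T) * q ^ k"
    using assms(2,4) by (intro mult_right_mono) (auto simp: T'_def intro: card_mono)
  finally show ?thesis .
qed

section \<open>Degenerate configurations\<close>

fun sum_pairs :: "int \<times> int \<times> int \<times> int \<times> int \<Rightarrow> int list" where
  "sum_pairs (v1, u, v2, v3, v4) = [v1, u, v2, v1 + u - v2, v3, v1 + u - v3, v4, v1 + u - v4]"

fun difference_pairs :: "int \<times> int \<times> int \<times> int \<times> int \<Rightarrow> int list" where
  "difference_pairs (v1, u, v2, v3, v4) = [v1, u, v2, v2 - (v1 - u), v3, v3 - (v1 - u), v4, v4 - (v1 - u)]"

definition has_four_pairs_same_sum :: "int set \<Rightarrow> int set \<Rightarrow> bool" where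
  "has_four_pairs_same_sum I R \<longleftrightarrow>
     (\<exists>t \<in> I \<times> I \<times> I \<times> I \<times> I. distinct (sum_pairs t) \<and> set (sum_pairs t) \<subseteq> I \<and> set (sum_pairs t) \<subseteq> R)"

definition has_four_pairs_same_difference :: "int set \<Rightarrow> int set \<Rightarrow> bool" where
  "has_four_pairs_same_difference I R \<longleftrightarrow>
     (\<exists>t \<in> I \<times> I \<times> I \<times> I \<times> I. distinct (difference_pairs t) \<and> set (difference_pairs t) \<subseteq> I
        \<and> set (difference_pairs t) \<subseteq> R)"

fun entries :: "int \<times> int \<times> int \<times> int \<times> int \<Rightarrow> int set" where
  "entries (a, b, c, d, e) = {a, b, c, d, e}"

fun third :: "int \<times> int \<times> int \<times> int \<times> int \<Rightarrow> int" where
  "third (a, b, c, d, e) = c"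

lemma finite_entries [simp]: "finite (entries w)"
  by (cases w) simp

lemma card_entries_le: "card (entries w) \<le> 5"
proof (cases w)
  case (fields a b c d e)
  thus ?thesis using card_length[of "[a, b, c, d, e]"] by simp
qed

lemma mem_pow5_iff: "w \<in> pow5 R \<longleftrightarrow> entries w \<subseteq> R"
  by (cases w) (auto simp: pow5_def)

definition disjoint_entries4 ::
  "int \<times> int \<times> int \<times> int \<times> int \<Rightarrow> int \<times> int \<times> int \<times> int \<times> int \<Rightarrow>
   int \<times> int \<times> int \<times> int \<times> int \<Rightarrow> int \<times> int \<times> int \<times> int \<times> int \<Rightarrow> bool" where
  "disjoint_entries4 w1 w2 w3 w4 \<longleftrightarrow>
     entries w1 \<inter> entries w2 = {} \<and> entries w1 \<inter> entries w3 = {} \<and> entries w1 \<inter> entries w4 = {}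
     \<and> entries w2 \<inter> entries w3 = {} \<and> entries w2 \<inter> entries w4 = {} \<and> entries w3 \<inter> entries w4 = {}"

definition has_four_disjoint_solutions :: "nat \<Rightarrow> int set \<Rightarrow> bool" where
  "has_four_disjoint_solutions p R \<longleftrightarrow> (\<exists>n \<in> {0..3 * int p}. \<exists>w1 w2 w3 w4.
     w1 \<in> Qset p n \<and> w2 \<in> Qset p n \<and> w3 \<in> Qset p n \<and> w4 \<in> Qset p n \<and> disjoint_entries4 w1 w2 w3 w4
     \<and> entries w1 \<union> entries w2 \<union> entries w3 \<union> entries w4 \<subseteq> R)"

section \<open>Solutions inside a non-degenerate set\<close>

lemma ex_notin_list_if_length_less:
  assumes "length xs < card V"
  shows "\<exists>v\<in>V. v \<notin> set xs"
  using card_mono[of "set xs" V] card_length[of xs] assms by fastforce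

lemma card_sum_representations_le:
  assumes "\<not> has_four_pairs_same_sum I R" "R \<subseteq> I"
  shows "card {v\<in>R. m - v \<in> R} \<le> 7"
proof (rule ccontr)
  let ?V = "{v\<in>R. m - v \<in> R}"
  assume "\<not> ?thesis"
  hence c: "card ?V \<ge> 8" by simp
  \<comment> \<open>Avoiding \<open>m div 2\<close> rules out the self-paired element \<open>v = m - v\<close>.\<close>
  obtain v1 where v1: "v1 \<in> ?V" "v1 \<notin> set [m div 2]"
    using ex_notin_list_if_length_less[of "[m div 2]" ?V] c by auto
  obtain v2 where v2: "v2 \<in> ?V" "v2 \<notin> set [m div 2, v1, m - v1]"
    using ex_notin_list_if_length_less[of "[m div 2, v1, m - v1]" ?V] c by auto
  obtain v3 where v3: "v3 \<in> ?V" "v3 \<notin> set [m div 2, v1, m - v1, v2, m - v2]"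
    using ex_notin_list_if_length_less[of "[m div 2, v1, m - v1, v2, m - v2]" ?V] c by auto
  obtain v4 where v4: "v4 \<in> ?V" "v4 \<notin> set [m div 2, v1, m - v1, v2, m - v2, v3, m - v3]"
    using ex_notin_list_if_length_less[of "[m div 2, v1, m - v1, v2, m - v2, v3, m - v3]" ?V] c by auto
  have not_half: "2 * v \<noteq> m" if "v \<noteq> m div 2" for v using that by auto
  have "sum_pairs (v1, m - v1, v2, v3, v4) = [v1, m - v1, v2, m - v2, v3, m - v3, v4, m - v4]"
    by simp
  moreover have "distinct [v1, m - v1, v2, m - v2, v3, m - v3, v4, m - v4]"
    using v1 v2 v3 v4 not_half[of v1] not_half[of v2] not_half[of v3] not_half[of v4] by auto
  moreover have "set [v1, m - v1, v2, m - v2, v3, m - v3, v4, m - v4] \<subseteq> R"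
    using v1 v2 v3 v4 by auto
  moreover have "(v1, m - v1, v2, v3, v4) \<in> I \<times> I \<times> I \<times> I \<times> I"
    using v1 v2 v3 v4 assms(2) by auto
  ultimately show False using assms unfolding has_four_pairs_same_sum_def by (metis order_trans)
qed

lemma card_difference_representations_le:
  assumes "\<not> has_four_pairs_same_difference I R" "R \<subseteq> I" "x \<noteq> 0"
  shows "card {v\<in>R. v - x \<in> R} \<le> 9"
proof (rule ccontr)
  let ?V = "{v\<in>R. v - x \<in> R}"
  assume "\<not> ?thesis"
  hence c: "card ?V \<ge> 10" by simp
  obtain v1 where v1: "v1 \<in> ?V"
    using ex_notin_list_if_length_less[of "[]" ?V] c by auto
  obtain v2 where v2: "v2 \<in> ?V" "v2 \<notin> set [v1, v1 - x, v1 + x]"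
    using ex_notin_list_if_length_less[of "[v1, v1 - x, v1 + x]" ?V] c by auto
  obtain v3 where v3: "v3 \<in> ?V" "v3 \<notin> set [v1, v1 - x, v1 + x, v2, v2 - x, v2 + x]"
    using ex_notin_list_if_length_less[of "[v1, v1 - x, v1 + x, v2, v2 - x, v2 + x]" ?V] c by auto
  obtain v4 where v4: "v4 \<in> ?V" "v4 \<notin> set [v1, v1 - x, v1 + x, v2, v2 - x, v2 + x, v3, v3 - x, v3 + x]"
    using ex_notin_list_if_length_less[of "[v1, v1 - x, v1 + x, v2, v2 - x, v2 + x, v3, v3 - x, v3 + x]" ?V] c
    by auto
  have "difference_pairs (v1, v1 - x, v2, v3, v4) = [v1, v1 - x, v2, v2 - x, v3, v3 - x, v4, v4 - x]"
    by simp
  moreover have "distinct [v1, v1 - x, v2, v2 - x, v3, v3 - x, v4, v4 - x]"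
    using v1 v2 v3 v4 assms(3) by auto
  moreover have "set [v1, v1 - x, v2, v2 - x, v3, v3 - x, v4, v4 - x] \<subseteq> R"
    using v1 v2 v3 v4 by auto
  moreover have "(v1, v1 - x, v2, v3, v4) \<in> I \<times> I \<times> I \<times> I \<times> I"
    using v1 v2 v3 v4 assms(2) by auto
  ultimately show False using assms unfolding has_four_pairs_same_difference_def by (metis order_trans)
qed

lemma card_solutions_with_third_le:
  assumes "\<not> has_four_pairs_same_sum I R" "R \<subseteq> I" "finite R"
  shows "card {w \<in> Qset p n \<inter> pow5 R. third w = c} \<le> 98"
proof -
  define Sa where "Sa = {a\<in>R. (n - c) - a \<in> R}"
  define Sd where "Sd = {d\<in>R. c - d \<in> R} \<times> {0::int} \<union> {d\<in>R. (c - 1) - d \<in> R} \<times> {1}"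
  define g where "g = (\<lambda>(a::int, d::int, \<delta>::int). (a, n - c - a, c, d, c - \<delta> - d))"
  have "finite Sa" "finite Sd" using assms(3) by (auto simp: Sa_def Sd_def)
  have "card Sa \<le> 7" unfolding Sa_def by (rule card_sum_representations_le[OF assms(1,2)])
  have "card Sd \<le> card ({d\<in>R. c - d \<in> R} \<times> {0::int}) + card ({d\<in>R. (c - 1) - d \<in> R} \<times> {1::int})"
    unfolding Sd_def by (rule card_Un_le)
  also have "\<dots> \<le> 7 + 7"
    using card_sum_representations_le[OF assms(1,2), of c] card_sum_representations_le[OF assms(1,2), of "c - 1"]
    by (simp add: card_cartesian_product)
  finally have "card Sd \<le> 14" by simp
  have "{w \<in> Qset p n \<inter> pow5 R. third w = c} \<subseteq> g ` (Sa \<times> Sd)"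
  proof
    fix w assume w: "w \<in> {w \<in> Qset p n \<inter> pow5 R. third w = c}"
    obtain a b d e where w_eq: "w = (a, b, c, d, e)" using w by (cases w) auto
    from w w_eq have "a + b + c = n" "c - d - e \<in> {0, 1}" "a \<in> R" "b \<in> R" "c \<in> R" "d \<in> R" "e \<in> R"
      by (auto simp: Qset_def pow5_def)
    hence "(a, d, c - d - e) \<in> Sa \<times> Sd" "w = g (a, d, c - d - e)"
      by (auto simp: Sa_def Sd_def g_def w_eq algebra_simps)
    thus "w \<in> g ` (Sa \<times> Sd)" by blast
  qed
  hence "card {w \<in> Qset p n \<inter> pow5 R. third w = c} \<le> card (g ` (Sa \<times> Sd))"
    using \<open>finite Sa\<close> \<open>finite Sd\<close> by (intro card_mono) auto
  also have "\<dots> \<le> card Sa * card Sd"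
    using card_image_le[of "Sa \<times> Sd" g] \<open>finite Sa\<close> \<open>finite Sd\<close> by (simp add: card_cartesian_product)
  also have "\<dots> \<le> 7 * 14" using \<open>card Sa \<le> 7\<close> \<open>card Sd \<le> 14\<close> by (intro mult_mono) auto
  finally show ?thesis by simp
qed

lemma card_solutions_with_third_in_le:
  assumes "\<not> has_four_pairs_same_sum I R" "R \<subseteq> I" "finite R" "finite C"
  shows "card {w \<in> Qset p n \<inter> pow5 R. third w \<in> C} \<le> 98 * card C"
proof -
  have "{w \<in> Qset p n \<inter> pow5 R. third w \<in> C} = (\<Union>c\<in>C. {w \<in> Qset p n \<inter> pow5 R. third w = c})"
    by auto
  hence "card {w \<in> Qset p n \<inter> pow5 R. third w \<in> C} \<le> (\<Sum>c\<in>C. card {w \<in> Qset p n \<inter> pow5 R. third w = c})"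
    using card_UN_le[OF assms(4)] by simp
  also have "\<dots> \<le> (\<Sum>c\<in>C. 98)" by (intro sum_mono card_solutions_with_third_le[OF assms(1-3)])
  finally show ?thesis by simp
qed

text \<open>
  If \<open>x\<close> occurs in a solution \<open>(a, b, c, d, e)\<close> with all entries in \<open>R\<close>, then either \<open>c = x\<close>, or \<open>x\<close> is
  \<open>a\<close> or \<open>b\<close> and the other one is \<open>n - x - c\<close>, or \<open>x\<close> is \<open>d\<close> or \<open>e\<close> and the other one is \<open>c - x\<close> or
  \<open>c - x - 1\<close>.
\<close>

definition third_candidates :: "int \<Rightarrow> int set \<Rightarrow> int \<Rightarrow> int set" where
  "third_candidates n R x = {x} \<union> {c\<in>R. (n - x) - c \<in> R} \<union> {c\<in>R. c - x \<in> R} \<union> {c\<in>R. c - (x + 1) \<in> R}"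

lemma third_mem_third_candidates:
  assumes "w \<in> Qset p n \<inter> pow5 R" "x \<in> entries w"
  shows "third w \<in> third_candidates n R x"
proof -
  obtain a b c d e where w_eq: "w = (a, b, c, d, e)" by (cases w) auto
  from assms w_eq have "a + b + c = n" "c - d - e \<in> {0, 1}" "a \<in> R" "b \<in> R" "c \<in> R" "d \<in> R" "e \<in> R"
      "x \<in> {a, b, c, d, e}"
    by (auto simp: Qset_def pow5_def)
  thus ?thesis unfolding w_eq third_candidates_def by (auto simp: algebra_simps)
qed

lemma card_third_candidates_le:
  assumes "\<not> has_four_pairs_same_sum I R" "\<not> has_four_pairs_same_difference I R" "R \<subseteq> I" "x \<ge> 1"
  shows "card (third_candidates n R x) \<le> 26"
proof -
  have "card (third_candidates n R x)
      \<le> card {x} + card {c\<in>R. (n - x) - c \<in> R} + card {c\<in>R. c - x \<in> R} + card {c\<in>R. c - (x + 1) \<in> R}"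
    unfolding third_candidates_def
    using card_Un_le[of "{x} \<union> {c\<in>R. (n - x) - c \<in> R} \<union> {c\<in>R. c - x \<in> R}" "{c\<in>R. c - (x + 1) \<in> R}"]
      card_Un_le[of "{x} \<union> {c\<in>R. (n - x) - c \<in> R}" "{c\<in>R. c - x \<in> R}"]
      card_Un_le[of "{x}" "{c\<in>R. (n - x) - c \<in> R}"]
    by linarith
  also have "\<dots> \<le> 1 + 7 + 9 + 9"
    using card_sum_representations_le[OF assms(1,3)] card_difference_representations_le[OF assms(2,3)] assms(4)
    by (intro add_mono) auto
  finally show ?thesis by simp
qed

lemma ex_solution_avoiding:
  assumes "\<not> has_four_pairs_same_sum I R" "\<not> has_four_pairs_same_difference I R" "R \<subseteq> I" "finite R"
    and "finite P" "P \<subseteq> {1..}" "card (Qset p n \<inter> pow5 R) > 98 * 26 * card P"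
  shows "\<exists>w \<in> Qset p n \<inter> pow5 R. entries w \<inter> P = {}"
proof -
  define U where "U = (\<Union>x\<in>P. third_candidates n R x)"
  have "finite U" using assms(4,5) by (simp add: U_def third_candidates_def)
  have "card U \<le> (\<Sum>x\<in>P. card (third_candidates n R x))" unfolding U_def by (rule card_UN_le[OF assms(5)])
  also have "\<dots> \<le> (\<Sum>x\<in>P. 26)"
    using assms(6) by (intro sum_mono card_third_candidates_le[OF assms(1-3)]) auto
  also have "\<dots> = 26 * card P" by simp
  finally have "card {w \<in> Qset p n \<inter> pow5 R. third w \<in> U} < card (Qset p n \<inter> pow5 R)"
    using card_solutions_with_third_in_le[OF assms(1,3,4) \<open>finite U\<close>, of p n] assms(7) by linarith
  hence "{w \<in> Qset p n \<inter> pow5 R. third w \<in> U} \<noteq> Qset p n \<inter> pow5 R"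
    by auto
  then obtain w where w: "w \<in> Qset p n \<inter> pow5 R" "third w \<notin> U"
    by blast
  have "entries w \<inter> P = {}"
    using third_mem_third_candidates[OF w(1)] w(2) by (auto simp: U_def)
  with w show ?thesis by blast
qed

lemma entries_Qset_subset: "w \<in> Qset p n \<Longrightarrow> entries w \<subseteq> Iset p"
  by (cases w) (auto simp: Qset_def)

lemma mem_Qset_range: "w \<in> Qset p n \<Longrightarrow> n \<in> {0..3 * int p}"
  by (cases w) (auto simp: Qset_def Iset_def)

lemma card_solutions_le_if_not_degenerate:
  assumes "\<not> has_four_pairs_same_sum (Iset p) R" "\<not> has_four_pairs_same_difference (Iset p) R"
    and "\<not> has_four_disjoint_solutions p R" "R \<subseteq> Iset p" "finite R"
  shows "card (Qset p n \<inter> pow5 R) \<le> 38220"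
proof (rule ccontr)
  assume many: "\<not> ?thesis"
  have avoid: "\<exists>w \<in> Qset p n \<inter> pow5 R. entries w \<inter> P = {}" if "P \<subseteq> R" "finite P" "card P \<le> 15" for P
  proof (rule ex_solution_avoiding[OF assms(1,2,4,5) \<open>finite P\<close>])
    show "P \<subseteq> {1..}" using \<open>P \<subseteq> R\<close> assms(4) by (auto simp: Iset_def)
    show "98 * 26 * card P < card (Qset p n \<inter> pow5 R)" using \<open>card P \<le> 15\<close> many by linarith
  qed
  have in_R: "entries w \<subseteq> R" if "w \<in> Qset p n \<inter> pow5 R" for w
    using that by (simp add: mem_pow5_iff)
  obtain w1 where w1: "w1 \<in> Qset p n \<inter> pow5 R" using avoid[of "{}"] by auto
  obtain w2 where w2: "w2 \<in> Qset p n \<inter> pow5 R" "entries w2 \<inter> entries w1 = {}"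
    using avoid[of "entries w1"] in_R[OF w1] card_entries_le[of w1] by auto
  have "card (entries w1 \<union> entries w2) \<le> 10"
    using card_Un_le[of "entries w1" "entries w2"] card_entries_le[of w1] card_entries_le[of w2] by linarith
  then obtain w3 where w3: "w3 \<in> Qset p n \<inter> pow5 R" "entries w3 \<inter> (entries w1 \<union> entries w2) = {}"
    using avoid[of "entries w1 \<union> entries w2"] in_R[OF w1] in_R[OF w2(1)] by auto
  have "card (entries w1 \<union> entries w2 \<union> entries w3) \<le> 15"
    using card_Un_le[of "entries w1 \<union> entries w2" "entries w3"] \<open>card (entries w1 \<union> entries w2) \<le> 10\<close>
      card_entries_le[of w3] by linarith
  then obtain w4 where w4: "w4 \<in> Qset p n \<inter> pow5 R" "entries w4 \<inter> (entries w1 \<union> entries w2 \<union> entries w3) = {}"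
    using avoid[of "entries w1 \<union> entries w2 \<union> entries w3"] in_R[OF w1] in_R[OF w2(1)] in_R[OF w3(1)] by auto
  have "disjoint_entries4 w1 w2 w3 w4"
    using w2(2) w3(2) w4(2) by (auto simp: disjoint_entries4_def)
  hence "has_four_disjoint_solutions p R"
    unfolding has_four_disjoint_solutions_def
    using w1 w2 w3 w4 in_R mem_Qset_range[of w1 p n] by blast
  with assms(3) show False by contradiction
qed

section \<open>Counting solutions by their number of distinct entries\<close>

lemma Qset_elim:
  assumes "(a, b, c, d, e) \<in> Qset p n"
  shows "a \<in> Iset p" "b \<in> Iset p" "c \<in> Iset p" "d \<in> Iset p" "e \<in> Iset p"
    "a \<noteq> b" "a \<noteq> c" "b \<noteq> c" "a + b + c = n" "c - d - e \<in> {0, 1}" "d \<noteq> c" "e \<noteq> c"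
  using assms by (auto simp: Qset_def Iset_def)

lemma finite_Iset: "finite (Iset p)"
  by (simp add: Iset_def)

lemma card_Iset_le: "card (Iset p) \<le> p"
  by (simp add: Iset_def)

lemma finite_Qset: "finite (Qset p n)"
proof -
  have "Qset p n \<subseteq> Iset p \<times> Iset p \<times> Iset p \<times> Iset p \<times> Iset p" by (auto simp: Qset_def)
  thus ?thesis by (rule finite_subset) (simp add: finite_Iset)
qed

text \<open>
  In each of the three counts below a solution is recovered injectively from a few of its
  entries together with \<open>c - d - e\<close> and, for degenerate solutions, a tag recording which entries
  coincide; the sum \<open>a + b + c = n\<close> determines the remaining entry.
\<close>

lemma card_Qset_le: "card (Qset p n) \<le> 2 * card (Iset p) ^ 3"
proof -
  let ?I = "Iset p"
  define h where "h = (\<lambda>(a::int, b::int, c::int, d::int, e::int). (a, b, d, c - d - e))"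
  have inj: "inj_on h (Qset p n)"
  proof (rule inj_onI)
    fix w w' assume w: "w \<in> Qset p n" "w' \<in> Qset p n" "h w = h w'"
    obtain a b c d e where w_eq: "w = (a, b, c, d, e)" by (cases w) auto
    obtain a' b' c' d' e' where w'_eq: "w' = (a', b', c', d', e')" by (cases w') auto
    show "w = w'" using w Qset_elim(9)[of a b c d e p n] Qset_elim(9)[of a' b' c' d' e' p n]
      unfolding w_eq w'_eq h_def by auto
  qed
  have image: "h ` Qset p n \<subseteq> ?I \<times> ?I \<times> ?I \<times> {0, 1}"
    by (auto simp: h_def Qset_def)
  have "card (Qset p n) = card (h ` (Qset p n))" using inj by (rule card_image[symmetric])
  also have "\<dots> \<le> card (?I \<times> ?I \<times> ?I \<times> {0::int, 1})" using image by (intro card_mono) (simp_all add: finite_Iset)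
  also have "\<dots> = 2 * card ?I ^ 3" by (simp add: card_cartesian_product power3_eq_cube)
  finally show ?thesis .
qed

lemma card_Qset_entries_le_4: "card {w \<in> Qset p n. card (entries w) \<le> 4} \<le> 10 * card (Iset p) ^ 2"
proof -
  let ?I = "Iset p" and ?Q4 = "{w \<in> Qset p n. card (entries w) \<le> 4}"
  have coinc: "d = a \<or> d = b \<or> d = e \<or> e = a \<or> e = b" if "(a, b, c, d, e) \<in> ?Q4" for a b c d e
  proof (rule ccontr)
    assume no_coincidence: "\<not> ?thesis"
    from that have Q: "(a, b, c, d, e) \<in> Qset p n" and le: "card {a, b, c, d, e} \<le> 4"
      by (simp_all only: mem_Collect_eq entries.simps)
    have "distinct [a, b, c, d, e]" using Qset_elim[OF Q] no_coincidence by auto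
    hence "card {a, b, c, d, e} = 5" using distinct_card[of "[a, b, c, d, e]"] by simp
    with le show False by linarith
  qed
  define tag where "tag = (\<lambda>(a::int, b::int, c::int, d::int, e::int).
      if d = a then 0 else if d = b then 1 else if d = e then 2 else if e = a then 3 else (4::int))"
  define h where "h = (\<lambda>w. case w of (a::int, b::int, c::int, d::int, e::int) \<Rightarrow> (a, b, c - d - e, tag w))"
  have inj: "inj_on h ?Q4"
  proof (rule inj_onI)
    fix w w' assume w: "w \<in> ?Q4" "w' \<in> ?Q4" "h w = h w'"
    obtain a b c d e where w_eq: "w = (a, b, c, d, e)" by (cases w) auto
    obtain a' b' c' d' e' where w'_eq: "w' = (a', b', c', d', e')" by (cases w') auto
    have Q: "(a, b, c, d, e) \<in> ?Q4" "(a', b', c', d', e') \<in> ?Q4" using w(1,2) unfolding w_eq w'_eq .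
    hence "(a, b, c, d, e) \<in> Qset p n" "(a', b', c', d', e') \<in> Qset p n" by blast+
    hence "a + b + c = n" "a' + b' + c' = n" by (blast dest: Qset_elim(9))+
    moreover have "a = a'" "b = b'" "c - d - e = c' - d' - e'" "tag (a, b, c, d, e) = tag (a', b', c', d', e')"
      using w(3) unfolding w_eq w'_eq h_def by auto
    ultimately show "w = w'"
      using coinc[OF Q(1)] coinc[OF Q(2)] unfolding w_eq w'_eq tag_def by (auto split: if_splits)
  qed
  have image: "h ` ?Q4 \<subseteq> ?I \<times> ?I \<times> {0, 1} \<times> {0..4}"
  proof -
    have "h ` Qset p n \<subseteq> ?I \<times> ?I \<times> {0, 1} \<times> {0..4}" by (auto simp: h_def tag_def Qset_def)
    thus ?thesis by blast
  qed
  have "card ?Q4 = card (h ` ?Q4)" using inj by (rule card_image[symmetric])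
  also have "\<dots> \<le> card (?I \<times> ?I \<times> {0::int, 1} \<times> {0::int..4})" using image by (intro card_mono) (simp_all add: finite_Iset)
  also have "\<dots> = 10 * card ?I ^ 2" by (simp add: card_cartesian_product power2_eq_square)
  finally show ?thesis .
qed

lemma card_Qset_entries_le_3: "card {w \<in> Qset p n. card (entries w) \<le> 3} \<le> 8 * card (Iset p)"
proof -
  let ?I = "Iset p" and ?Q3 = "{w \<in> Qset p n. card (entries w) \<le> 3}"
  have coinc: "(d = a \<or> d = b) \<and> (e = a \<or> e = b)" if "(a, b, c, d, e) \<in> ?Q3" for a b c d e
  proof -
    from that have Q: "(a, b, c, d, e) \<in> Qset p n" and le: "card {a, b, c, d, e} \<le> 3"
      by (simp_all only: mem_Collect_eq entries.simps)
    have "card {a, b, c} = 3" using Qset_elim[OF Q] by auto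
    moreover have "card {a, b, c} \<le> card {a, b, c, d, e}" by (rule card_mono) auto
    ultimately have "card {a, b, c} = card {a, b, c, d, e}" using le by linarith
    hence "{a, b, c} = {a, b, c, d, e}" by (rule card_subset_eq[rotated 2]) auto
    thus ?thesis using Qset_elim[OF Q] by auto
  qed
  define tag where "tag = (\<lambda>(a::int, b::int, c::int, d::int, e::int).
      if d = a \<and> e = a then 0 else if d = a then 1 else if e = a then 2 else (3::int))"
  define h where "h = (\<lambda>w. case w of (a::int, b::int, c::int, d::int, e::int) \<Rightarrow> (a, c - d - e, tag w))"
  have inj: "inj_on h ?Q3"
  proof (rule inj_onI)
    fix w w' assume w: "w \<in> ?Q3" "w' \<in> ?Q3" "h w = h w'"
    obtain a b c d e where w_eq: "w = (a, b, c, d, e)" by (cases w) auto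
    obtain a' b' c' d' e' where w'_eq: "w' = (a', b', c', d', e')" by (cases w') auto
    have Q: "(a, b, c, d, e) \<in> ?Q3" "(a', b', c', d', e') \<in> ?Q3" using w(1,2) unfolding w_eq w'_eq .
    hence "(a, b, c, d, e) \<in> Qset p n" "(a', b', c', d', e') \<in> Qset p n" by blast+
    hence "a + b + c = n" "a' + b' + c' = n" "a \<noteq> b" "a' \<noteq> b'" by (blast dest: Qset_elim(6,9))+
    moreover have "a = a'" "c - d - e = c' - d' - e'" "tag (a, b, c, d, e) = tag (a', b', c', d', e')"
      using w(3) unfolding w_eq w'_eq h_def by auto
    ultimately show "w = w'"
      using coinc[OF Q(1)] coinc[OF Q(2)] unfolding w_eq w'_eq tag_def by (auto split: if_splits)
  qed
  have image: "h ` ?Q3 \<subseteq> ?I \<times> {0, 1} \<times> {0..3}"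
  proof -
    have "h ` Qset p n \<subseteq> ?I \<times> {0, 1} \<times> {0..3}" by (auto simp: h_def tag_def Qset_def)
    thus ?thesis by blast
  qed
  have "card ?Q3 = card (h ` ?Q3)" using inj by (rule card_image[symmetric])
  also have "\<dots> \<le> card (?I \<times> {0::int, 1} \<times> {0::int..3})" using image by (intro card_mono) (simp_all add: finite_Iset)
  also have "\<dots> = 8 * card ?I" by (simp add: card_cartesian_product)
  finally show ?thesis .
qed

lemma card_entries_Qset_ge_3: "w \<in> Qset p n \<Longrightarrow> 3 \<le> card (entries w)"
proof (cases w)
  case (fields a b c d e)
  assume "w \<in> Qset p n"
  hence "card {a, b, c} = 3" using Qset_elim[of a b c d e p n] fields by auto
  moreover have "card {a, b, c} \<le> card {a, b, c, d, e}" by (rule card_mono) auto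
  ultimately show ?thesis using fields by simp
qed

definition weight_bound :: "real \<Rightarrow> real \<Rightarrow> real" where
  "weight_bound N q = 2 * N ^ 3 * q ^ 5 + 10 * N ^ 2 * q ^ 4 + 8 * N * q ^ 3"

lemma sum_Qset_weights_le:
  assumes "0 \<le> q" "q \<le> 1"
  shows "(\<Sum>w\<in>Qset p n. q ^ card (entries w)) \<le> weight_bound (real (card (Iset p))) q"
proof -
  let ?Q = "Qset p n"
  have "q ^ card (entries w)
      \<le> q ^ 5 + (if card (entries w) \<le> 4 then q ^ 4 else 0) + (if card (entries w) \<le> 3 then q ^ 3 else 0)"
    if "w \<in> ?Q" for w
  proof -
    have "card (entries w) = 3 \<or> card (entries w) = 4 \<or> card (entries w) = 5"
      using card_entries_Qset_ge_3[OF that] card_entries_le[of w] by auto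
    thus ?thesis using assms by (elim disjE) simp_all
  qed
  hence "(\<Sum>w\<in>?Q. q ^ card (entries w))
      \<le> (\<Sum>w\<in>?Q. q ^ 5 + (if card (entries w) \<le> 4 then q ^ 4 else 0) + (if card (entries w) \<le> 3 then q ^ 3 else 0))"
    by (rule sum_mono)
  also have "\<dots> = real (card ?Q) * q ^ 5 + real (card {w\<in>?Q. card (entries w) \<le> 4}) * q ^ 4
      + real (card {w\<in>?Q. card (entries w) \<le> 3}) * q ^ 3"
    by (simp add: sum.distrib sum.inter_filter[OF finite_Qset, symmetric])
  also have "\<dots> \<le> real (2 * card (Iset p) ^ 3) * q ^ 5 + real (10 * card (Iset p) ^ 2) * q ^ 4
      + real (8 * card (Iset p)) * q ^ 3"
    by (intro add_mono mult_right_mono of_nat_mono card_Qset_le card_Qset_entries_le_4 card_Qset_entries_le_3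
        zero_le_power assms(1))
  finally show ?thesis by (simp add: weight_bound_def)
qed
section \<open>Probability of a degenerate set\<close>

lemma prob_four_pairs_same_sum_le:
  assumes "0 \<le> q" "q \<le> 1"
  shows "measure_pmf.prob (rand_subset (Iset p) q) {R. has_four_pairs_same_sum (Iset p) R}
           \<le> real (card (Iset p)) ^ 5 * q ^ 8"
proof -
  have "measure_pmf.prob (rand_subset (Iset p) q) {R. has_four_pairs_same_sum (Iset p) R}
      \<le> real (card (Iset p \<times> Iset p \<times> Iset p \<times> Iset p \<times> Iset p)) * q ^ 8"
    unfolding has_four_pairs_same_sum_def
    by (rule prob_rand_subset_distinct_list_le) (auto simp: finite_Iset assms)
  thus ?thesis by (simp add: card_cartesian_product power_numeral_reduce)
qed

lemma prob_four_pairs_same_difference_le: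
  assumes "0 \<le> q" "q \<le> 1"
  shows "measure_pmf.prob (rand_subset (Iset p) q) {R. has_four_pairs_same_difference (Iset p) R}
           \<le> real (card (Iset p)) ^ 5 * q ^ 8"
proof -
  have "measure_pmf.prob (rand_subset (Iset p) q) {R. has_four_pairs_same_difference (Iset p) R}
      \<le> real (card (Iset p \<times> Iset p \<times> Iset p \<times> Iset p \<times> Iset p)) * q ^ 8"
    unfolding has_four_pairs_same_difference_def
    by (rule prob_rand_subset_distinct_list_le) (auto simp: finite_Iset assms)
  thus ?thesis by (simp add: card_cartesian_product power_numeral_reduce)
qed

lemma sum_cartesian_power4:
  fixes g :: "'a \<Rightarrow> 'b::comm_semiring_1"
  shows "(\<Sum>(a, b, c, d)\<in>A \<times> A \<times> A \<times> A. g a * g b * g c * g d) = sum g A ^ 4"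
  by (simp add: sum.cartesian_product[symmetric] sum_product sum_distrib_left sum_distrib_right
      eval_nat_numeral ac_simps)

lemma card_entries_Un4:
  assumes "disjoint_entries4 w1 w2 w3 w4"
  shows "card (entries w1 \<union> entries w2 \<union> entries w3 \<union> entries w4)
           = card (entries w1) + card (entries w2) + card (entries w3) + card (entries w4)"
proof -
  have "card (entries w1 \<union> entries w2 \<union> entries w3 \<union> entries w4)
      = card (entries w1 \<union> entries w2 \<union> entries w3) + card (entries w4)"
    using assms by (intro card_Un_disjoint) (auto simp: disjoint_entries4_def simp del: entries.simps)
  also have "card (entries w1 \<union> entries w2 \<union> entries w3) = card (entries w1 \<union> entries w2) + card (entries w3)"
    using assms by (intro card_Un_disjoint) (auto simp: disjoint_entries4_def simp del: entries.simps)
  also have "card (entries w1 \<union> entries w2) = card (entries w1) + card (entries w2)"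
    using assms by (intro card_Un_disjoint) (auto simp: disjoint_entries4_def simp del: entries.simps)
  finally show ?thesis .
qed

lemma prob_four_disjoint_solutions_le:
  assumes "0 \<le> q" "q \<le> 1"
  shows "measure_pmf.prob (rand_subset (Iset p) q) {R. has_four_disjoint_solutions p R}
           \<le> (3 * real p + 1) * weight_bound (real (card (Iset p))) q ^ 4"
proof -
  let ?N = "{0..3 * int p}"
  define g where "g w = q ^ card (entries w)" for w
  define Sg where "Sg = Sigma ?N (\<lambda>n. Qset p n \<times> Qset p n \<times> Qset p n \<times> Qset p n)"
  define T where "T = {(n, w1, w2, w3, w4) \<in> Sg. disjoint_entries4 w1 w2 w3 w4}"
  define S where "S = (\<lambda>(n::int, w1, w2, w3, w4). entries w1 \<union> entries w2 \<union> entries w3 \<union> entries w4)"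
  have "finite Sg" unfolding Sg_def by (intro finite_SigmaI finite_cartesian_product finite_Qset) auto
  hence "finite T" by (rule finite_subset[rotated]) (auto simp: T_def)
  have "{R. has_four_disjoint_solutions p R} \<subseteq> {R. \<exists>t\<in>T. S t \<subseteq> R}"
  proof
    fix R assume "R \<in> {R. has_four_disjoint_solutions p R}"
    then obtain n w1 w2 w3 w4 where "n \<in> ?N" "w1 \<in> Qset p n" "w2 \<in> Qset p n" "w3 \<in> Qset p n"
      "w4 \<in> Qset p n" "disjoint_entries4 w1 w2 w3 w4" "entries w1 \<union> entries w2 \<union> entries w3 \<union> entries w4 \<subseteq> R"
      unfolding has_four_disjoint_solutions_def by blast
    hence "(n, w1, w2, w3, w4) \<in> T" "S (n, w1, w2, w3, w4) \<subseteq> R" by (simp_all add: T_def Sg_def S_def)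
    thus "R \<in> {R. \<exists>t\<in>T. S t \<subseteq> R}" by blast
  qed
  hence "measure_pmf.prob (rand_subset (Iset p) q) {R. has_four_disjoint_solutions p R}
      \<le> measure_pmf.prob (rand_subset (Iset p) q) {R. \<exists>t\<in>T. S t \<subseteq> R}"
    by (rule measure_pmf.finite_measure_mono) simp
  also have "\<dots> \<le> (\<Sum>t\<in>T. q ^ card (S t))"
    using entries_Qset_subset
    by (intro prob_rand_subset_superset_ex_le finite_Iset \<open>finite T\<close> assms)
      (fastforce simp: T_def Sg_def S_def)
  also have "\<dots> = (\<Sum>(n, w1, w2, w3, w4)\<in>T. g w1 * g w2 * g w3 * g w4)"
    by (intro sum.cong refl) (auto simp: T_def S_def g_def card_entries_Un4 power_add simp del: entries.simps)
  also have "\<dots> \<le> (\<Sum>(n, w1, w2, w3, w4)\<in>Sg. g w1 * g w2 * g w3 * g w4)"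
    using assms(1) by (intro sum_mono2 \<open>finite Sg\<close>) (auto simp: T_def g_def)
  also have "\<dots> = (\<Sum>n\<in>?N. (\<Sum>w\<in>Qset p n. g w) ^ 4)"
    unfolding Sg_def sum_cartesian_power4[symmetric]
    by (subst sum.Sigma) (auto intro!: finite_cartesian_product finite_Qset simp: case_prod_beta)
  also have "\<dots> \<le> (\<Sum>n\<in>?N. weight_bound (real (card (Iset p))) q ^ 4)"
    using assms by (intro sum_mono power_mono sum_nonneg) (auto simp: g_def sum_Qset_weights_le)
  also have "\<dots> = (3 * real p + 1) * weight_bound (real (card (Iset p))) q ^ 4"
    by simp
  finally show ?thesis .
qed

lemma prob_many_solutions_le_weights:
  assumes "0 \<le> q" "q \<le> 1" "38220 < K"
  shows "measure_pmf.prob (rand_subset (Iset p) q) {R. \<exists>n. K \<le> card (Qset p n \<inter> pow5 R)}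
           \<le> 2 * real (card (Iset p)) ^ 5 * q ^ 8 + (3 * real p + 1) * weight_bound (real (card (Iset p))) q ^ 4"
proof -
  let ?M = "rand_subset (Iset p) q"
  let ?B1 = "{R. has_four_pairs_same_sum (Iset p) R}" and ?B2 = "{R. has_four_pairs_same_difference (Iset p) R}"
    and ?B3 = "{R. has_four_disjoint_solutions p R}"
  have "{R. \<exists>n. K \<le> card (Qset p n \<inter> pow5 R)} \<inter> set_pmf ?M \<subseteq> ?B1 \<union> ?B2 \<union> ?B3"
  proof
    fix R assume "R \<in> {R. \<exists>n. K \<le> card (Qset p n \<inter> pow5 R)} \<inter> set_pmf ?M"
    then obtain n where R: "R \<in> set_pmf ?M" "K \<le> card (Qset p n \<inter> pow5 R)" by blast
    have "R \<subseteq> Iset p" using set_pmf_rand_subset[OF R(1)] .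
    moreover from this have "finite R" using finite_Iset finite_subset by blast
    ultimately show "R \<in> ?B1 \<union> ?B2 \<union> ?B3"
      using card_solutions_le_if_not_degenerate[of p R n] R(2) assms(3) by fastforce
  qed
  hence "measure_pmf.prob ?M {R. \<exists>n. K \<le> card (Qset p n \<inter> pow5 R)} \<le> measure_pmf.prob ?M (?B1 \<union> ?B2 \<union> ?B3)"
    by (subst measure_Int_set_pmf[symmetric]) (rule measure_pmf.finite_measure_mono, auto)
  also have "\<dots> \<le> measure_pmf.prob ?M ?B1 + measure_pmf.prob ?M ?B2 + measure_pmf.prob ?M ?B3"
    using measure_Un_le[of "?B1 \<union> ?B2" ?M ?B3] measure_Un_le[of ?B1 ?M ?B2] by simp
  also have "\<dots> \<le> 2 * real (card (Iset p)) ^ 5 * q ^ 8 + (3 * real p + 1) * weight_bound (real (card (Iset p))) q ^ 4"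
    using prob_four_pairs_same_sum_le[OF assms(1,2), of p] prob_four_pairs_same_difference_le[OF assms(1,2), of p]
      prob_four_disjoint_solutions_le[OF assms(1,2), of p]
    unfolding mult.assoc by linarith
  finally show ?thesis .
qed

lemma monomial_le_div:
  fixes t K N :: real
  assumes "1 \<le> t" "1 \<le> K" "0 \<le> N" "N \<le> t ^ 3" "3 * a < 2 * b" "b \<le> k"
  shows "N ^ a * (K / t ^ 2) ^ b \<le> K ^ k / t"
proof -
  have "N ^ a * (K / t ^ 2) ^ b \<le> (t ^ 3) ^ a * (K / t ^ 2) ^ b"
    using assms by (intro mult_right_mono power_mono) auto
  also have "\<dots> = K ^ b * t ^ (3 * a) / t ^ (2 * b)"
    by (simp add: power_divide flip: power_mult)
  also have "\<dots> = K ^ b / t ^ (2 * b - 3 * a)"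
    using assms(1,5) by (simp add: power_diff)
  also have "\<dots> \<le> K ^ b / t"
    using assms(1,2,5) power_increasing[of 1 "2 * b - 3 * a" t]
    by (intro divide_left_mono) auto
  also have "\<dots> \<le> K ^ k / t"
    using assms(1,2,6) by (intro divide_right_mono power_increasing) auto
  finally show ?thesis .
qed

lemma first_moment_le_inverse:
  fixes t K N q :: real
  assumes "1 \<le> t" "1 \<le> K" "0 \<le> N" "N \<le> t ^ 3" "640002 * K ^ 21 \<le> t" "q = K / t ^ 2"
  shows "2 * N ^ 5 * q ^ 8 + (3 * t ^ 3 + 1) * weight_bound N q ^ 4 \<le> 1 / K"
proof -
  note monomial = monomial_le_div[OF assms(1-4), folded assms(6)]
  have "weight_bound N q \<le> 20 * (K ^ 5 / t)"
    using monomial[of 3 5 5] monomial[of 2 4 5] monomial[of 1 3 5] by (simp add: weight_bound_def)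
  moreover have "0 \<le> weight_bound N q"
    using assms by (simp add: weight_bound_def)
  ultimately have "(3 * t ^ 3 + 1) * weight_bound N q ^ 4 \<le> (4 * t ^ 3) * (20 * (K ^ 5 / t)) ^ 4"
    using assms(1) by (intro mult_mono power_mono) (auto simp: one_le_power)
  also have "\<dots> = (4 * t ^ 3) * (160000 * (K ^ 20 / t ^ 4))"
    by (simp add: power_mult_distrib power_divide flip: power_mult)
  also have "\<dots> = 640000 * K ^ 20 / t"
    using assms(1) by (simp add: field_simps) (simp flip: power_Suc)
  finally have "(3 * t ^ 3 + 1) * weight_bound N q ^ 4 \<le> 640000 * K ^ 20 / t" .
  moreover have "2 * N ^ 5 * q ^ 8 \<le> 2 * K ^ 20 / t"
    using monomial[of 5 8 20] by simp
  ultimately have "2 * N ^ 5 * q ^ 8 + (3 * t ^ 3 + 1) * weight_bound N q ^ 4 \<le> 640002 * K ^ 20 / t"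
    by (simp add: add_divide_distrib[symmetric])
  also have "\<dots> \<le> 1 / K"
  proof -
    have "640002 * K ^ 20 * K \<le> t"
      using assms(5) power_add[of K 20 1] by simp
    thus ?thesis using assms(1,2) by (simp add: field_simps)
  qed
  finally show ?thesis .
qed

lemma prob_many_solutions_le:
  assumes "38221 \<le> K" "640002 * real K ^ 21 \<le> real p powr (1/3)"
  shows "measure_pmf.prob (rand_subset (Iset p) (real K * real p powr (-2/3)))
           {R. \<exists>n. K \<le> card (Qset p n \<inter> pow5 R)} \<le> 1 / real K"
proof -
  define t where "t = real p powr (1/3)"
  have "0 < p"
  proof (rule ccontr)
    assume "\<not> 0 < p"
    hence "real K ^ 21 \<le> 0" using assms(2) by simp
    thus False using assms(1) by (simp add: not_le)
  qed
  hence "1 \<le> t"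
    by (simp add: t_def ge_one_powr_ge_zero)
  have "t ^ 3 = t powr 3"
    using \<open>1 \<le> t\<close> by (simp add: powr_realpow)
  also have "\<dots> = real p"
    by (simp add: t_def powr_powr)
  finally have "t ^ 3 = real p" .
  have "t ^ 2 = t powr 2"
    using \<open>1 \<le> t\<close> by (simp add: powr_realpow)
  also have "\<dots> = real p powr (2/3)"
    by (simp add: t_def powr_powr)
  finally have "real p powr (-2/3) = 1 / t ^ 2"
    by (simp add: powr_minus_divide)
  have big: "640002 * real K ^ 21 \<le> t"
    using assms(2) by (simp add: t_def)
  define q where "q = real K / t ^ 2"
  have q_eq: "real K * real p powr (-2/3) = q"
    by (simp only: q_def \<open>real p powr (-2/3) = 1 / t ^ 2\<close>) simp
  have "real K \<le> t ^ 2"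
  proof -
    have "real K \<le> real K ^ 21" using assms(1) by (intro self_le_power) auto
    also have "\<dots> \<le> t" using big zero_le_power[of "real K" 21] by linarith
    also have "\<dots> \<le> t ^ 2" using \<open>1 \<le> t\<close> by (simp add: power2_eq_square)
    finally show ?thesis .
  qed
  hence "0 \<le> q" "q \<le> 1" using \<open>1 \<le> t\<close> by (simp_all add: q_def)
  have "measure_pmf.prob (rand_subset (Iset p) q) {R. \<exists>n. K \<le> card (Qset p n \<inter> pow5 R)}
      \<le> 2 * real (card (Iset p)) ^ 5 * q ^ 8 + (3 * t ^ 3 + 1) * weight_bound (real (card (Iset p))) q ^ 4"
    using prob_many_solutions_le_weights[OF \<open>0 \<le> q\<close> \<open>q \<le> 1\<close>, of K p] assms(1)
    unfolding \<open>t ^ 3 = real p\<close> by linarith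
  also have "\<dots> \<le> 1 / real K"
  proof (rule first_moment_le_inverse[OF \<open>1 \<le> t\<close> _ _ _ big q_def])
    show "1 \<le> real K" using assms(1) by simp
    show "0 \<le> real (card (Iset p))" by simp
    show "real (card (Iset p)) \<le> t ^ 3" using card_Iset_le[of p] \<open>t ^ 3 = real p\<close> by simp
  qed
  finally show ?thesis unfolding q_eq .
qed

lemma eventually_Kp_large:
  "eventually (\<lambda>p. 38221 \<le> Kp p \<and> 640002 * real (Kp p) ^ 21 \<le> real p powr (1/3)) sequentially"
proof -
  have "eventually (\<lambda>x::real. 38221 \<le> ln x \<and> 640002 * (ln x + 1) ^ 21 \<le> x powr (1/3)) at_top"
    by (intro eventually_conj) real_asymp+
  hence "eventually (\<lambda>p. 38221 \<le> ln (real p) \<and> 640002 * (ln (real p) + 1) ^ 21 \<le> real p powr (1/3)) sequentially"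
    using filterlim_real_sequentially by (rule eventually_compose_filterlim)
  thus ?thesis
  proof (rule eventually_mono)
    fix p :: nat assume p: "38221 \<le> ln (real p) \<and> 640002 * (ln (real p) + 1) ^ 21 \<le> real p powr (1/3)"
    have Kp: "real (Kp p) = of_int \<lceil>ln (real p)\<rceil>"
      using p by (simp add: Kp_def)
    hence "38221 \<le> Kp p" using p by linarith
    moreover have "real (Kp p) ^ 21 \<le> (ln (real p) + 1) ^ 21"
      using Kp p by (intro power_mono) linarith+
    ultimately show "38221 \<le> Kp p \<and> 640002 * real (Kp p) ^ 21 \<le> real p powr (1/3)"
      using p by linarith
  qed
qed

theorem mainTheorem10:
  shows "\<exists>C::real. \<exists>P0::nat. \<forall>p::nat. prime p \<and> p \<ge> P0 \<longrightarrow>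
    measure_pmf.prob (rand_subset (Iset p) (real (Kp p) * real p powr (-2/3)))
      {R. \<exists>n::int. real p / 5 \<le> real_of_int n \<and> real_of_int n \<le> 7 * real p / 5 \<and>
            card (Qset p n \<inter> pow5 R) \<ge> Kp p}
    \<le> C / real (Kp p)"
proof -
  obtain P0 where P0: "\<And>p. P0 \<le> p \<Longrightarrow> 38221 \<le> Kp p \<and> 640002 * real (Kp p) ^ 21 \<le> real p powr (1/3)"
    using eventually_Kp_large unfolding eventually_sequentially by blast
  have "measure_pmf.prob (rand_subset (Iset p) (real (Kp p) * real p powr (-2/3)))
      {R. \<exists>n::int. real p / 5 \<le> real_of_int n \<and> real_of_int n \<le> 7 * real p / 5 \<and> card (Qset p n \<inter> pow5 R) \<ge> Kp p}
      \<le> 1 / real (Kp p)" if "P0 \<le> p" for p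
  proof -
    have "measure_pmf.prob (rand_subset (Iset p) (real (Kp p) * real p powr (-2/3)))
        {R. \<exists>n::int. real p / 5 \<le> real_of_int n \<and> real_of_int n \<le> 7 * real p / 5 \<and> card (Qset p n \<inter> pow5 R) \<ge> Kp p}
        \<le> measure_pmf.prob (rand_subset (Iset p) (real (Kp p) * real p powr (-2/3)))
        {R. \<exists>n. Kp p \<le> card (Qset p n \<inter> pow5 R)}"
      by (rule measure_pmf.finite_measure_mono) auto
    also have "\<dots> \<le> 1 / real (Kp p)"
      using P0[OF that] by (intro prob_many_solutions_le) auto
    finally show ?thesis .
  qed
  thus ?thesis by blast
qed

end
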